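(* Let $(f_0, M_0, \Lambda_0, \mathcal{Q}_0)$ be a SIMDG with training distribution $P_{\mathrm{tr}}$ as described in the context, let $q=\mathrm{rank}(M_0)$ and $R$, $\gamma_0$, $f_\star$ be as in the context, and take $\mathcal{F}$ and $\mathcal{G}$ to be the classes of all measurable functions $\mathbb{R}^p\to\mathbb{R}$. Then the BCF $f_\star$ is identifiable from $P_{\mathrm{tr}}$ (with respect to $\mathcal{F}$ and $\mathcal{G}$) if and only if for all measurable functions $h,g:\mathbb{R}^p\to\mathbb{R}$ the following holds: if $h(X)+g(V)=0$ $P_{\mathrm{tr}}$-a.s., then - if $q<p$: there exists $\delta:\mathbb{R}^{p-q}\to\mathbb{R}$ such that $h(X)=\delta(R^\top X)$ $P_{\mathrm{tr}}$-a.s.; - if $q=p$: there exists $c\in\mathbb{R}$ such that $h(X)=c$ $P_{\mathrm{tr}}$-a.s.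
   Context: Fix integers $p,r\ge 1$. A SIMDG is a tuple $(f_0, M_0, \Lambda_0, \mathcal{Q}_0)$ where $f_0:\mathbb{R}^p\to\mathbb{R}$ is measurable, $M_0\in\mathbb{R}^{p\times r}$, $\Lambda_0$ is a distribution on $\mathbb{R}^{1+p}$ such that $(U,V)\sim\Lambda_0$ satisfies $\mathrm{E}[(U,V)]=0$ and $\mathrm{E}[\|(U,V)\|_2^2]<\infty$, and $\mathcal{Q}_0$ is a set of distributions on $\mathbb{R}^r$. For each $Q\in\mathcal{Q}_0$ the model induces a distribution $P$ of $(U,V,X,Y,Z)$ by drawing $((U,V),Z)\sim\Lambda_0\otimes Q$ and setting $X = M_0 Z + V$, $Y = f_0(X)+U$; $\mathcal{P}_0$ is the set of all such induced distributions. Standing setting: $\sup_{P\in\mathcal{P}_0}\mathrm{E}_P[f_0(X)]^2<\infty$; $Q_{\mathrm{tr}}\in\mathcal{Q}_0$ satisfies $\mathrm{E}_{Q_{\mathrm{tr}}}[Z]=0$ and $\mathrm{E}_{Q_{\mathrm{tr}}}[ZZ^\top]\succ 0$; $P_{\mathrm{tr}}$ is the distribution induced by $Q_{\mathrm{tr}}$. Let $q=\mathrm{rank}(M_0)$; if $q<p$, $R\in\mathbb{R}^{p\times(p-q)}$ is a matrix whose columns form an orthonormal basis of $\ker(M_0^\top)$, and if $q=p$, $R$ is the zero vector in $\mathbb{R}^{p\times 1}$. Define the control function $\gamma_0(v):=\mathrm{E}_{P_{\mathrm{tr}}}[U\mid V=v]$. The boosted control function (BCF) is defined for $P_{\mathrm{tr}}$-a.e.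 $x$ by $f_\star(x):=f_0(x)+\mathrm{E}_{P_{\mathrm{tr}}}[\gamma_0(V)\mid R^\top X = R^\top x]$ (so $f_\star=f_0$ when $q=p$). Identifiability: given classes $\mathcal{F},\mathcal{G}$ of measurable functions with $f_0\in\mathcal{F}$, $\gamma_0\in\mathcal{G}$, the BCF is identifiable from $P_{\mathrm{tr}}$ (w.r.t. $\mathcal{F},\mathcal{G}$) if for all $f\in\mathcal{F}$, $\gamma\in\mathcal{G}$: whenever $\mathrm{E}_{P_{\mathrm{tr}}}[Y\mid X,V]=f(X)+\gamma(V)$ $P_{\mathrm{tr}}$-a.s., then $f_\star(X)=f(X)+\mathrm{E}_{P_{\mathrm{tr}}}[\gamma(V)\mid R^\top X]$ $P_{\mathrm{tr}}$-a.s. if $q<p$, and $f_\star(X)=f(X)+\mathrm{E}_{P_{\mathrm{tr}}}[\gamma(V)]$ $P_{\mathrm{tr}}$-a.s. if $q=p$. *)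

theory Defs
  imports "HOL-Analysis.Analysis" "HOL-Probability.Probability"
begin

(* Vectors in R^p / R^r are real^'p / real^'r; M0 is a p x r matrix real^'r^'p.
   The sample space of the model is ((U,V),Z) :: (real * real^'p) * real^'r
   with law Lambda0 (x) Q (product measure). *)

type_synonym ('p,'r) sample = "(real \<times> (real^('p::finite))) \<times> (real^('r::finite))"

definition simU :: "('p,'r) sample \<Rightarrow> real" where
  "simU \<omega> = fst (fst \<omega>)"

definition simV :: "('p,'r) sample \<Rightarrow> real^'p" where
  "simV \<omega> = snd (fst \<omega>)"

definition simZ :: "('p,'r) sample \<Rightarrow> real^'r" where
  "simZ \<omega> = snd \<omega>"

definition simX :: "real^'r^'p \<Rightarrow> ('p,'r) sample \<Rightarrow> real^'p" where
  "simX M0 \<omega> = M0 *v simZ \<omega> + simV \<omega>"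

definition simY :: "(real^'p \<Rightarrow> real) \<Rightarrow> real^'r^'p \<Rightarrow> ('p,'r) sample \<Rightarrow> real" where
  "simY f0 M0 \<omega> = f0 (simX M0 \<omega>) + simU \<omega>"

definition induced :: "(real \<times> (real^'p)) measure \<Rightarrow> (real^'r) measure \<Rightarrow> ('p,'r) sample measure" where
  "induced \<Lambda>0 Q = \<Lambda>0 \<Otimes>\<^sub>M Q"

definition SIMDG :: "(real^'p \<Rightarrow> real) \<Rightarrow> real^'r^'p \<Rightarrow> (real \<times> (real^'p)) measure \<Rightarrow> (real^'r) measure set \<Rightarrow> bool" where
  "SIMDG f0 M0 \<Lambda>0 Q0 \<longleftrightarrow>
     f0 \<in> borel_measurable borel \<and>
     prob_space \<Lambda>0 \<and> sets \<Lambda>0 = sets borel \<and>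
     integrable \<Lambda>0 (\<lambda>w. norm w ^ 2) \<and>
     integrable \<Lambda>0 (\<lambda>w. w) \<and> (\<integral>w. w \<partial>\<Lambda>0) = 0 \<and>
     (\<forall>Q\<in>Q0. prob_space Q \<and> sets Q = sets borel)"

definition sup_second_moment_finite :: "(real^'p \<Rightarrow> real) \<Rightarrow> real^'r^'p \<Rightarrow> (real \<times> (real^'p)) measure \<Rightarrow> (real^'r) measure set \<Rightarrow> bool" where
  "sup_second_moment_finite f0 M0 \<Lambda>0 Q0 \<longleftrightarrow>
     (SUP Q\<in>Q0. (\<integral>\<^sup>+ \<omega>. ennreal ((f0 (simX M0 \<omega>))\<^sup>2) \<partial>induced \<Lambda>0 Q)) < \<infinity>"

definition second_moment_matrix :: "(real^'r) measure \<Rightarrow> real^'r^'r" where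
  "second_moment_matrix Q = (\<chi> i j. \<integral>z. z $ i * z $ j \<partial>Q)"

definition pos_def :: "(real^'n^'n) \<Rightarrow> bool" where
  "pos_def A \<longleftrightarrow> (\<forall>a. a \<noteq> 0 \<longrightarrow> a \<bullet> (A *v a) > 0)"

definition training_distribution :: "(real^'r) measure \<Rightarrow> bool" where
  "training_distribution Q \<longleftrightarrow>
     integrable Q (\<lambda>z. norm z ^ 2) \<and> integrable Q (\<lambda>z. z) \<and>
     (\<integral>z. z \<partial>Q) = 0 \<and> pos_def (second_moment_matrix Q)"

text \<open>R^T x is the vector (R j \<bullet> x)_(j < p-q) in R^(p-q), represented as an extensional
  function on {..<p-q}.\<close>
definition kerT :: "real^'r^'p \<Rightarrow> (real^'p) set" where
  "kerT M0 = {x. transpose M0 *v x = 0}"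

definition ker_onb :: "real^'r^'p \<Rightarrow> (nat \<Rightarrow> real^'p) \<Rightarrow> bool" where
  "ker_onb M0 R \<longleftrightarrow>
     (let n = CARD('p) - rank M0 in
       (\<forall>j<n. R j \<in> kerT M0) \<and>
       (\<forall>i<n. \<forall>j<n. R i \<bullet> R j = (if i = j then 1 else 0)) \<and>
       span (R ` {..<n}) = kerT M0)"

definition RT :: "real^'r^'p \<Rightarrow> (nat \<Rightarrow> real^'p) \<Rightarrow> real^'p \<Rightarrow> (nat \<Rightarrow> real)" where
  "RT M0 R x = (\<lambda>j\<in>{..<CARD('p) - rank M0}. R j \<bullet> x)"

definition RT_space :: "real^'r^'p \<Rightarrow> (nat \<Rightarrow> real) measure" where
  "RT_space M0 = (\<Pi>\<^sub>M j\<in>{..<CARD('p) - rank M0}. borel)"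

definition sigma_XV :: "real^'r^'p \<Rightarrow> ('p,'r) sample measure \<Rightarrow> ('p,'r) sample measure" where
  "sigma_XV M0 P = vimage_algebra (space P) (\<lambda>\<omega>. (simX M0 \<omega>, simV \<omega>)) borel"

definition sigma_V :: "('p::finite,'r::finite) sample measure \<Rightarrow> ('p,'r) sample measure" where
  "sigma_V P = vimage_algebra (space P) simV borel"

definition sigma_RX :: "real^'r^'p \<Rightarrow> (nat \<Rightarrow> real^'p) \<Rightarrow> ('p,'r) sample measure \<Rightarrow> ('p,'r) sample measure" where
  "sigma_RX M0 R P = vimage_algebra (space P) (\<lambda>\<omega>. RT M0 R (simX M0 \<omega>)) (RT_space M0)"

definition gamma0V :: "('p::finite,'r::finite) sample measure \<Rightarrow> ('p,'r) sample \<Rightarrow> real" where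
  "gamma0V P = real_cond_exp P (sigma_V P) simU"

definition fstarX :: "(real^'p \<Rightarrow> real) \<Rightarrow> real^'r^'p \<Rightarrow> (nat \<Rightarrow> real^'p) \<Rightarrow> ('p,'r) sample measure \<Rightarrow> ('p,'r) sample \<Rightarrow> real" where
  "fstarX f0 M0 R P \<omega> =
     f0 (simX M0 \<omega>) + (if rank M0 < CARD('p) then real_cond_exp P (sigma_RX M0 R P) (gamma0V P) \<omega> else 0)"

text \<open>Identifiability of the BCF from P_tr w.r.t. F = all measurable f and
  G = all measurable gamma with gamma(V) P_tr-integrable (needed for E[gamma(V)|R^T X] and
  E[gamma(V)] to be defined).\<close>
definition BCF_identifiable :: "(real^'p \<Rightarrow> real) \<Rightarrow> real^'r^'p \<Rightarrow> (nat \<Rightarrow> real^'p) \<Rightarrow> ('p,'r) sample measure \<Rightarrow> bool" where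
  "BCF_identifiable f0 M0 R P \<longleftrightarrow>
     (\<forall>f \<in> borel_measurable (borel :: (real^'p) measure).
      \<forall>\<gamma> \<in> borel_measurable (borel :: (real^'p) measure).
        integrable P (\<lambda>\<omega>. \<gamma> (simV \<omega>)) \<longrightarrow>
        (AE \<omega> in P. real_cond_exp P (sigma_XV M0 P) (simY f0 M0) \<omega> = f (simX M0 \<omega>) + \<gamma> (simV \<omega>)) \<longrightarrow>
        (if rank M0 < CARD('p) then
           (AE \<omega> in P. fstarX f0 M0 R P \<omega> = f (simX M0 \<omega>) + real_cond_exp P (sigma_RX M0 R P) (\<lambda>\<omega>'. \<gamma> (simV \<omega>')) \<omega>)
         else
           (AE \<omega> in P. fstarX f0 M0 R P \<omega> = f (simX M0 \<omega>) + (\<integral>\<omega>'. \<gamma> (simV \<omega>') \<partial>P))))"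

end

theory Submission
  imports Defs
begin

text \<open>
  Since \<open>Z\<close> is independent of \<open>(U, V)\<close> and \<open>\<sigma>(X, V) \<subseteq> \<sigma>(V, Z)\<close>, the regression function is
  \<open>E[Y | X, V] = f\<^sub>0(X) + \<gamma>\<^sub>0(V)\<close>. Hence \<open>(f, \<gamma>)\<close> satisfies the premise of identifiability iff
  \<open>h = f\<^sub>0 - f\<close> and \<open>g = \<gamma>\<^sub>0 - \<gamma>\<close> satisfy \<open>h(X) + g(V) = 0\<close> a.s., and its conclusion then reads
  \<open>h(X) = E[h(X) | R\<^sup>T X]\<close> a.s. (\<open>h(X) = E[h(X)]\<close> a.s. if \<open>q = p\<close>), i.e. \<open>h(X)\<close> is a.s. a function
  of \<open>R\<^sup>T X\<close>. Arbitrary measurable \<open>h\<close>, \<open>g\<close> are reduced to bounded ones, so that \<open>\<gamma>(V)\<close> is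
  integrable, by composing with \<open>arctan\<close>. A possibly non-measurable \<open>\<delta>\<close> with
  \<open>h(X) = \<delta>(R\<^sup>T X)\<close> a.s. is replaced by a Borel one using inner regularity: the continuous map
  \<open>x \<mapsto> R R\<^sup>T x\<close> sends compact sets to compact, hence Borel, sets.
\<close>

section \<open>Borel versions of almost-everywhere factorisations\<close>

lemma inner_regular_compact_approx:
  fixes M :: "'a::{second_countable_topology, complete_space} measure"
  assumes sets_M: "sets M = sets borel" and "finite_measure M" and B: "B \<in> sets borel" and "e > 0"
  shows "\<exists>K. compact K \<and> K \<subseteq> B \<and> measure M (B - K) < e"
proof -
  interpret finite_measure M by fact
  have "emeasure M B = (SUP K \<in> {K. K \<subseteq> B \<and> compact K}. emeasure M K)"
    using inner_regular[OF sets_M _ B] by simp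
  moreover have "emeasure M B \<noteq> \<infinity>"
    by simp
  ultimately have "\<exists>K\<in>{K. K \<subseteq> B \<and> compact K}. emeasure M B < emeasure M K + ennreal e"
    using \<open>e > 0\<close> by (intro SUP_approx_ennreal) auto
  then obtain K where K: "K \<subseteq> B" "compact K" and "emeasure M B < emeasure M K + ennreal e"
    by auto
  then have "measure M B < measure M K + e"
    using \<open>e > 0\<close> by (simp add: emeasure_eq_measure ennreal_less_iff flip: ennreal_plus)
  moreover have "K \<in> sets M"
    using K(2) by (simp add: sets_M borel_compact)
  ultimately show ?thesis
    using K finite_measure_Diff[of B K] B sets_M by auto
qed

lemma inner_regular_sigma_compact:
  fixes M :: "'a::{second_countable_topology, complete_space} measure"
  assumes sets_M: "sets M = sets borel" and "finite_measure M" and B: "B \<in> sets borel"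
  shows "\<exists>K :: nat \<Rightarrow> 'a set. (\<forall>n. compact (K n) \<and> K n \<subseteq> B) \<and> B - (\<Union>n. K n) \<in> null_sets M"
proof -
  interpret finite_measure M by fact
  have "\<exists>K. compact K \<and> K \<subseteq> B \<and> measure M (B - K) < 1 / Suc n" for n :: nat
    by (rule inner_regular_compact_approx[OF sets_M \<open>finite_measure M\<close> B]) simp
  then obtain K :: "nat \<Rightarrow> 'a set"
    where K: "\<And>n. compact (K n)" "\<And>n. K n \<subseteq> B" "\<And>n. measure M (B - K n) < 1 / Suc n"
    by metis
  have "K n \<in> sets M" for n
    using K(1) by (simp add: sets_M borel_compact)
  then have K_sets: "B - (\<Union>n. K n) \<in> sets M" "B - K n \<in> sets M" for n
    using B sets_M by auto
  have "measure M (B - (\<Union>n. K n)) < e" if "e > 0" for e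
  proof -
    obtain n where "1 / real (Suc n) < e"
      using \<open>e > 0\<close> by (meson nat_approx_posE)
    moreover have "measure M (B - (\<Union>n. K n)) \<le> measure M (B - K n)"
      using K_sets by (intro finite_measure_mono) auto
    ultimately show ?thesis
      using K(3)[of n] by linarith
  qed
  then have "measure M (B - (\<Union>n. K n)) = 0"
    using measure_nonneg[of M "B - (\<Union>n. K n)"]
    by (metis less_irrefl order.not_eq_order_implies_strict)
  with K_sets have "B - (\<Union>n. K n) \<in> null_sets M"
    by (auto simp: emeasure_eq_measure)
  with K show ?thesis
    by blast
qed

lemma real_of_ereal_SUP_Rats_cut:
  assumes "\<And>t. t \<in> \<rat> \<Longrightarrow> P t \<longleftrightarrow> t < y"
  shows "real_of_ereal (SUP t\<in>\<rat>. if P t then ereal t else -\<infinity>) = y"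
proof -
  have "(SUP t\<in>\<rat>. if P t then ereal t else -\<infinity>) = (SUP t\<in>\<rat>. if t < y then ereal t else -\<infinity>)"
    using assms by (intro SUP_cong) simp_all
  also have "\<dots> = ereal y"
  proof (rule antisym)
    show "(SUP t\<in>\<rat>. if t < y then ereal t else -\<infinity>) \<le> ereal y"
      by (rule SUP_least) auto
    show "ereal y \<le> (SUP t\<in>\<rat>. if t < y then ereal t else -\<infinity>)"
    proof (rule ereal_le_epsilon2)
      fix e :: real assume "e > 0"
      then obtain t where t: "t \<in> \<rat>" "y - e < t" "t < y"
        using Rats_dense_in_real[of "y - e" y] by auto
      then have "ereal t \<le> (SUP t\<in>\<rat>. if t < y then ereal t else -\<infinity>)"
        by (intro SUP_upper2[OF t(1)]) auto
      then have "ereal t + ereal e \<le> (SUP t\<in>\<rat>. if t < y then ereal t else -\<infinity>) + ereal e"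
        by (rule add_right_mono)
      moreover have "ereal y \<le> ereal t + ereal e"
        using t by simp
      ultimately show "ereal y \<le> (SUP t\<in>\<rat>. if t < y then ereal t else -\<infinity>) + ereal e"
        by (rule order_trans[rotated])
    qed
  qed
  finally show ?thesis
    by simp
qed

lemma borel_image_inner_approx:
  fixes M :: "'a::{second_countable_topology, complete_space} measure" and \<phi> :: "'a \<Rightarrow> 'b::t2_space"
  assumes sets_M: "sets M = sets borel" and "finite_measure M"
    and \<phi>: "continuous_on UNIV \<phi>" and S: "S \<in> sets borel"
  shows "\<exists>A \<in> sets borel. A \<subseteq> \<phi> ` S \<and> S - \<phi> -` A \<in> null_sets M"
proof -
  obtain K :: "nat \<Rightarrow> 'a set" where K: "\<forall>n. compact (K n) \<and> K n \<subseteq> S"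
    and null: "S - (\<Union>n. K n) \<in> null_sets M"
    using inner_regular_sigma_compact[OF sets_M \<open>finite_measure M\<close> S] by blast
  define A where "A = (\<Union>n. \<phi> ` K n)"
  have "compact (\<phi> ` K n)" for n
    using K by (intro compact_continuous_image continuous_on_subset[OF \<phi>]) auto
  then have A_borel: "A \<in> sets borel"
    unfolding A_def by (intro sets.countable_UN) (auto intro: borel_compact)
  moreover have "A \<subseteq> \<phi> ` S"
    unfolding A_def using K by blast
  moreover have "S - \<phi> -` A \<in> null_sets M"
  proof (rule null_sets_subset[OF null])
    have "\<phi> -` A \<in> sets borel"
      using measurable_sets[OF borel_measurable_continuous_onI[OF \<phi>] A_borel] by simp
    with S show "S - \<phi> -` A \<in> sets M"
      by (simp add: sets_M)
    show "S - \<phi> -` A \<subseteq> S - (\<Union>n. K n)"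
      unfolding A_def by blast
  qed
  ultimately show ?thesis
    by blast
qed

text \<open>The function \<open>\<delta>\<close> need not be measurable; a Borel version is recovered from the rational
  cuts \<open>{t < Y}\<close>, which are preimages of Borel sets up to null sets.\<close>
lemma AE_eq_comp_borel_factor:
  fixes M :: "'a::{second_countable_topology, complete_space} measure"
    and \<phi> :: "'a \<Rightarrow> 'b::t2_space" and Y :: "'a \<Rightarrow> real"
  assumes sets_M: "sets M = sets borel" and "finite_measure M"
    and \<phi>: "continuous_on UNIV \<phi>" and Y [measurable]: "Y \<in> borel_measurable borel"
    and "AE \<omega> in M. Y \<omega> = \<delta> (\<phi> \<omega>)"
  shows "\<exists>\<delta>' \<in> borel_measurable borel. AE \<omega> in M. Y \<omega> = \<delta>' (\<phi> \<omega>)"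
proof -
  have space_M: "space M = UNIV"
    using sets_eq_imp_space_eq[OF sets_M] by simp
  from \<open>AE \<omega> in M. Y \<omega> = \<delta> (\<phi> \<omega>)\<close> obtain N where
    Y_eq: "\<And>\<omega>. \<omega> \<in> space M - N \<Longrightarrow> Y \<omega> = \<delta> (\<phi> \<omega>)" and N: "N \<in> null_sets M"
    by (erule AE_E3)
  have [measurable]: "N \<in> sets borel"
    using N sets_M by auto
  have "\<exists>A \<in> sets borel. AE \<omega> in M. \<phi> \<omega> \<in> A \<longleftrightarrow> t < Y \<omega>" for t
  proof -
    define S where "S = {\<omega>. t < Y \<omega>} - N"
    have "S \<in> sets borel"
      unfolding S_def by measurable
    then obtain A where A: "A \<in> sets borel" "A \<subseteq> \<phi> ` S" "S - \<phi> -` A \<in> null_sets M"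
      using borel_image_inner_approx[OF sets_M \<open>finite_measure M\<close> \<phi>] by blast
    have "AE \<omega> in M. \<omega> \<notin> N \<union> (S - \<phi> -` A)"
      using N A(3) by (intro AE_not_in null_sets.Un)
    then have "AE \<omega> in M. \<phi> \<omega> \<in> A \<longleftrightarrow> t < Y \<omega>"
    proof eventually_elim
      case (elim \<omega>)
      then have "\<omega> \<notin> N" "\<omega> \<in> S \<Longrightarrow> \<phi> \<omega> \<in> A"
        by auto
      show ?case
      proof
        assume "\<phi> \<omega> \<in> A"
        with A(2) have "\<phi> \<omega> \<in> \<phi> ` S"
          by blast
        then obtain \<omega>' where "\<omega>' \<in> S" "\<phi> \<omega>' = \<phi> \<omega>"
          by (metis imageE)
        moreover from this(1) have "t < Y \<omega>'" "\<omega>' \<notin> N"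
          unfolding S_def by auto
        ultimately show "t < Y \<omega>"
          using Y_eq[of \<omega>] Y_eq[of \<omega>'] \<open>\<omega> \<notin> N\<close> by (simp add: space_M)
      next
        assume "t < Y \<omega>"
        with \<open>\<omega> \<notin> N\<close> have "\<omega> \<in> S"
          unfolding S_def by blast
        with \<open>\<omega> \<in> S \<Longrightarrow> \<phi> \<omega> \<in> A\<close> show "\<phi> \<omega> \<in> A"
          by blast
      qed
    qed
    with A(1) show ?thesis
      by blast
  qed
  then have "\<forall>t. \<exists>A. A \<in> sets borel \<and> (AE \<omega> in M. \<phi> \<omega> \<in> A \<longleftrightarrow> t < Y \<omega>)"
    by blast
  from choice[OF this] obtain A :: "real \<Rightarrow> 'b set"
    where A: "\<forall>t. A t \<in> sets borel \<and> (AE \<omega> in M. \<phi> \<omega> \<in> A t \<longleftrightarrow> t < Y \<omega>)" ..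
  define \<delta>' where "\<delta>' y = real_of_ereal (SUP t\<in>\<rat>. if y \<in> A t then ereal t else -\<infinity>)" for y
  have "\<delta>' \<in> borel_measurable borel"
    unfolding \<delta>'_def
  proof (intro borel_measurable_real_of_ereal borel_measurable_SUP countable_rat)
    fix t
    have [measurable]: "A t \<in> sets borel"
      using A by blast
    show "(\<lambda>y. if y \<in> A t then ereal t else -\<infinity>) \<in> borel_measurable borel"
      by measurable
  qed
  moreover have "AE \<omega> in M. \<forall>t\<in>\<rat>. \<phi> \<omega> \<in> A t \<longleftrightarrow> t < Y \<omega>"
    using A by (simp add: AE_ball_countable countable_rat)
  then have "AE \<omega> in M. Y \<omega> = \<delta>' (\<phi> \<omega>)"
    unfolding \<delta>'_def by eventually_elim (rule real_of_ereal_SUP_Rats_cut[symmetric], simp)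
  ultimately show ?thesis
    by blast
qed

lemma AE_eq_comp_arctan_iff:
  "(\<exists>\<delta>. AE \<omega> in M. arctan (Y \<omega>) = \<delta> (\<phi> \<omega>)) \<longleftrightarrow> (\<exists>\<delta>. AE \<omega> in M. Y \<omega> = \<delta> (\<phi> \<omega>))"
proof
  assume "\<exists>\<delta>. AE \<omega> in M. arctan (Y \<omega>) = \<delta> (\<phi> \<omega>)"
  then obtain \<delta> where "AE \<omega> in M. arctan (Y \<omega>) = \<delta> (\<phi> \<omega>)" ..
  then have "AE \<omega> in M. Y \<omega> = tan (\<delta> (\<phi> \<omega>))"
    by eventually_elim (metis tan_arctan)
  then show "\<exists>\<delta>. AE \<omega> in M. Y \<omega> = \<delta> (\<phi> \<omega>)"
    by (intro exI[where x = "\<lambda>y. tan (\<delta> y)"])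
next
  assume "\<exists>\<delta>. AE \<omega> in M. Y \<omega> = \<delta> (\<phi> \<omega>)"
  then obtain \<delta> where "AE \<omega> in M. Y \<omega> = \<delta> (\<phi> \<omega>)" ..
  then have "AE \<omega> in M. arctan (Y \<omega>) = arctan (\<delta> (\<phi> \<omega>))"
    by eventually_elim simp
  then show "\<exists>\<delta>. AE \<omega> in M. arctan (Y \<omega>) = \<delta> (\<phi> \<omega>)"
    by (intro exI[where x = "\<lambda>y. arctan (\<delta> y)"])
qed

section \<open>Conditional expectations\<close>

lemma borel_measurable_fst_borel [measurable]:
  "fst \<in> borel_measurable (borel :: ('a::second_countable_topology \<times> 'b::second_countable_topology) measure)"
  by (intro borel_measurable_continuous_onI continuous_intros)

lemma borel_measurable_snd_borel [measurable]:
  "snd \<in> borel_measurable (borel :: ('a::second_countable_topology \<times> 'b::second_countable_topology) measure)"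
  by (intro borel_measurable_continuous_onI continuous_intros)

lemma measurable_comp_vimage_algebra:
  assumes "\<phi> \<in> S \<rightarrow> space N" "g \<in> measurable N L"
  shows "(\<lambda>x. g (\<phi> x)) \<in> measurable (vimage_algebra S \<phi> N) L"
  using measurable_comp[OF measurable_vimage_algebra1[OF assms(1)] assms(2)] by (simp add: comp_def)

lemma measurable_vimage_algebra_fibre_eq:
  fixes K :: "'a \<Rightarrow> 'b::t1_space"
  assumes K: "K \<in> borel_measurable (vimage_algebra S \<phi> N)" and \<phi>: "\<phi> \<in> S \<rightarrow> space N"
    and "\<omega> \<in> S" "\<omega>' \<in> S" "\<phi> \<omega> = \<phi> \<omega>'"
  shows "K \<omega> = K \<omega>'"
proof -
  have "K -` {K \<omega>} \<inter> S \<in> sets (vimage_algebra S \<phi> N)"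
    using measurable_sets[OF K, of "{K \<omega>}"] by simp
  then obtain B where B: "K -` {K \<omega>} \<inter> S = \<phi> -` B \<inter> S"
    using sets_vimage_algebra2[OF \<phi>] by auto
  have "\<omega> \<in> \<phi> -` B \<inter> S"
    using B[symmetric] \<open>\<omega> \<in> S\<close> by blast
  with \<open>\<phi> \<omega> = \<phi> \<omega>'\<close> \<open>\<omega>' \<in> S\<close> have "\<omega>' \<in> K -` {K \<omega>} \<inter> S"
    unfolding B by simp
  then show ?thesis by simp
qed

lemma measurable_vimage_algebra_factor:
  fixes K :: "'a \<Rightarrow> 'b::t1_space"
  assumes "K \<in> borel_measurable (vimage_algebra S \<phi> N)" "\<phi> \<in> S \<rightarrow> space N"
  shows "\<exists>K'. \<forall>\<omega>\<in>S. K \<omega> = K' (\<phi> \<omega>)"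
proof (intro exI ballI)
  fix \<omega> assume "\<omega> \<in> S"
  then have "\<exists>\<omega>'. \<omega>' \<in> S \<and> \<phi> \<omega>' = \<phi> \<omega>" by blast
  from someI_ex[OF this] \<open>\<omega> \<in> S\<close> show "K \<omega> = K (SOME \<omega>'. \<omega>' \<in> S \<and> \<phi> \<omega>' = \<phi> \<omega>)"
    by (intro measurable_vimage_algebra_fibre_eq[OF assms]) auto
qed

lemma (in finite_measure) sigma_finite_subalgebra_vimage_algebra:
  assumes "f \<in> measurable M N"
  shows "sigma_finite_subalgebra M (vimage_algebra (space M) f N)"
proof (rule finite_measure_subalgebra_is_sigma_finite)
  show "finite_measure_subalgebra M (vimage_algebra (space M) f N)"
    unfolding finite_measure_subalgebra_def finite_measure_subalgebra_axioms_def subalgebra_def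
    using assms sets_image_in_sets[OF refl assms] finite_measure_axioms by simp
qed

lemma (in sigma_finite_subalgebra) real_cond_exp_AE_F_meas:
  assumes "integrable M f" "K \<in> borel_measurable F" "AE x in M. f x = K x"
  shows "AE x in M. real_cond_exp M F f x = f x"
proof -
  have K_M: "K \<in> borel_measurable M"
    using assms(2) subalg by (simp add: measurable_from_subalg)
  have "integrable M K"
    using assms integrable_cong_AE[OF _ K_M, of f] by auto
  have "AE x in M. real_cond_exp M F f x = real_cond_exp M F K x"
    using assms K_M by (intro real_cond_exp_cong) auto
  moreover have "AE x in M. real_cond_exp M F K x = K x"
    using \<open>integrable M K\<close> assms(2) by (rule real_cond_exp_F_meas)
  ultimately show ?thesis
    using assms(3) by eventually_elim simp
qed

lemma (in prob_space) AE_eq_expectation_iff: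
  fixes f :: "'a \<Rightarrow> real"
  assumes "integrable M f"
  shows "(AE x in M. f x = expectation f) \<longleftrightarrow> (\<exists>c. AE x in M. f x = c)"
proof
  assume "\<exists>c. AE x in M. f x = c"
  then obtain c where c: "AE x in M. f x = c" ..
  then have "expectation f = c"
    using integral_cong_AE[of f M "\<lambda>_. c"] assms by (simp add: prob_space)
  with c show "AE x in M. f x = expectation f" by simp
qed blast

lemma (in pair_prob_space) integral_indicator_vimage_pair_eq_0:
  fixes F :: "'a \<Rightarrow> real"
  assumes F: "integrable M1 F" and V: "V \<in> measurable M1 C"
    and orth: "\<And>B. B \<in> sets C \<Longrightarrow> (\<integral>w. indicator B (V w) * F w \<partial>M1) = 0"
    and D: "D \<in> sets (C \<Otimes>\<^sub>M M2)"
  shows "integral\<^sup>L (M1 \<Otimes>\<^sub>M M2) (\<lambda>(w, z). indicator D (V w, z) * F w) = 0"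
proof -
  have F_fst: "integrable (M1 \<Otimes>\<^sub>M M2) (\<lambda>\<omega>. F (fst \<omega>))"
    using integrable_distr[OF measurable_fst, of M1 M2 F] F by (simp add: M2.distr_pair_fst)
  note [measurable] = V D borel_measurable_integrable[OF F]
  have "integrable (M1 \<Otimes>\<^sub>M M2) (\<lambda>(w, z). indicator D (V w, z) * F w)"
  proof (rule Bochner_Integration.integrable_bound[OF F_fst])
    show "(\<lambda>(w, z). indicator D (V w, z) * F w) \<in> borel_measurable (M1 \<Otimes>\<^sub>M M2)"
      by measurable
  qed (auto simp: indicator_def)
  then have "integral\<^sup>L (M1 \<Otimes>\<^sub>M M2) (\<lambda>(w, z). indicator D (V w, z) * F w)
      = (\<integral>z. (\<integral>w. indicator D (V w, z) * F w \<partial>M1) \<partial>M2)"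
    by (rule integral_snd[symmetric])
  moreover have "(\<integral>w. indicator D (V w, z) * F w \<partial>M1) = 0" for z
    using orth[OF sets_Pair2[OF D, of z]] by (simp add: indicator_def)
  ultimately show ?thesis by simp
qed

lemma continuous_on_simX:
  fixes M0 :: "real^'r^'p"
  shows "continuous_on UNIV (simX M0)"
proof -
  have "continuous_on UNIV (\<lambda>\<omega>::('p, 'r) sample. M0 *v snd \<omega>)"
    by (rule continuous_on_compose2[OF matrix_vector_mult_linear_continuous_on
          continuous_on_snd[OF continuous_on_id]]) auto
  then show ?thesis
    unfolding simX_def[abs_def] simZ_def simV_def by (intro continuous_intros)
qed

lemma borel_measurable_simX [measurable]: "simX M0 \<in> borel_measurable borel"
  using continuous_on_simX by (rule borel_measurable_continuous_onI)

lemma borel_measurable_simV [measurable]: "simV \<in> borel_measurable borel"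
  unfolding simV_def[abs_def] by (intro borel_measurable_continuous_onI continuous_intros)

lemma borel_measurable_simU [measurable]: "simU \<in> borel_measurable borel"
  unfolding simU_def[abs_def] by (intro borel_measurable_continuous_onI continuous_intros)

lemma measurable_RT [measurable]: "RT M0 R \<in> measurable borel (RT_space M0)"
  unfolding RT_def[abs_def] RT_space_def
  by (intro measurable_restrict) (auto intro!: borel_measurable_continuous_onI continuous_intros)

definition R_mult :: "real^'r^'p \<Rightarrow> (nat \<Rightarrow> real^'p) \<Rightarrow> (nat \<Rightarrow> real) \<Rightarrow> real^'p" where
  "R_mult M0 R y = (\<Sum>j<CARD('p) - rank M0. y j *\<^sub>R R j)"

lemma RT_R_mult:
  fixes M0 :: "real^'r^'p" and R :: "nat \<Rightarrow> real^'p"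
  assumes "ker_onb M0 R" "y \<in> extensional {..<CARD('p) - rank M0}"
  shows "RT M0 R (R_mult M0 R y) = y"
proof
  fix j
  show "RT M0 R (R_mult M0 R y) j = y j"
  proof (cases "j < CARD('p) - rank M0")
    case True
    have "R j \<bullet> R_mult M0 R y = (\<Sum>i<CARD('p) - rank M0. y i * (R j \<bullet> R i))"
      unfolding R_mult_def by (simp add: inner_sum_right)
    also have "\<dots> = (\<Sum>i<CARD('p) - rank M0. if i = j then y j else 0)"
      using assms(1) True unfolding ker_onb_def Let_def by (intro sum.cong) auto
    also have "\<dots> = y j"
      using True by simp
    finally show ?thesis
      using True unfolding RT_def by simp
  next
    case False
    with assms(2) show ?thesis
      unfolding RT_def by (simp add: extensional_def)
  qed
qed

lemma borel_measurable_R_mult [measurable]: "R_mult M0 R \<in> borel_measurable (RT_space M0)"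
  unfolding R_mult_def[abs_def] RT_space_def
  by (intro borel_measurable_sum borel_measurable_scaleR borel_measurable_const
      measurable_component_singleton) auto

lemma continuous_on_R_mult_RT:
  fixes M0 :: "real^'r^'p" and R :: "nat \<Rightarrow> real^'p"
  shows "continuous_on UNIV (\<lambda>x. R_mult M0 R (RT M0 R x))"
proof -
  have "R_mult M0 R (RT M0 R x) = (\<Sum>j<CARD('p) - rank M0. (R j \<bullet> x) *\<^sub>R R j)" for x
    unfolding R_mult_def RT_def by simp
  then show ?thesis
    by (simp add: continuous_intros)
qed

locale simdg_training =
  fixes f0 :: "real^'p \<Rightarrow> real" and M0 :: "real^'r^'p"
    and \<Lambda>0 :: "(real \<times> (real^'p)) measure" and Qtr :: "(real^'r) measure"
    and R :: "nat \<Rightarrow> real^'p"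
  assumes borel_measurable_f0 [measurable]: "f0 \<in> borel_measurable borel"
    and prob_space_\<Lambda>0: "prob_space \<Lambda>0" and sets_\<Lambda>0 [measurable_cong]: "sets \<Lambda>0 = sets borel"
    and integrable_\<Lambda>0: "integrable \<Lambda>0 (\<lambda>w. w)" and integral_\<Lambda>0: "(\<integral>w. w \<partial>\<Lambda>0) = 0"
    and prob_space_Qtr: "prob_space Qtr" and sets_Qtr [measurable_cong]: "sets Qtr = sets borel"
    and f0X_square: "(\<integral>\<^sup>+ \<omega>. ennreal ((f0 (simX M0 \<omega>))\<^sup>2) \<partial>induced \<Lambda>0 Qtr) < \<infinity>"
    and ker_onb: "ker_onb M0 R"
begin

abbreviation Ptr :: "('p, 'r) sample measure" where
  "Ptr \<equiv> induced \<Lambda>0 Qtr"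

lemma pair_prob_space: "pair_prob_space \<Lambda>0 Qtr"
  by (simp add: pair_prob_space_def pair_sigma_finite_def prob_space_imp_sigma_finite
      prob_space_\<Lambda>0 prob_space_Qtr)

lemma prob_space_Ptr: "prob_space Ptr"
  unfolding induced_def by (rule prob_space_pair[OF prob_space_\<Lambda>0 prob_space_Qtr])

lemma sets_Ptr [measurable_cong]: "sets Ptr = sets borel"
proof -
  have "sets Ptr = sets (borel \<Otimes>\<^sub>M borel :: ('p, 'r) sample measure)"
    unfolding induced_def by (rule sets_pair_measure_cong[OF sets_\<Lambda>0 sets_Qtr])
  then show ?thesis
    by (metis borel_prod)
qed

lemma space_Ptr: "space Ptr = UNIV"
  using sets_eq_imp_space_eq[OF sets_Ptr] by simp

lemma sets_borel_pair_Qtr: "sets (borel \<Otimes>\<^sub>M Qtr) = sets (borel :: ((real^'p) \<times> (real^'r)) measure)"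
proof -
  have "sets (borel \<Otimes>\<^sub>M Qtr) = sets (borel \<Otimes>\<^sub>M (borel :: (real^'r) measure) :: ((real^'p) \<times> (real^'r)) measure)"
    by (rule sets_pair_measure_cong[OF refl sets_Qtr])
  also have "\<dots> = sets borel"
    by (simp only: borel_prod)
  finally show ?thesis .
qed

lemma integral_Ptr_fst:
  fixes G :: "real \<times> (real^'p) \<Rightarrow> real"
  assumes [measurable]: "G \<in> borel_measurable borel"
  shows "(\<integral>\<omega>. G (fst \<omega>) \<partial>Ptr) = (\<integral>w. G w \<partial>\<Lambda>0)"
proof -
  have "(\<integral>w. G w \<partial>\<Lambda>0) = (\<integral>w. G w \<partial>distr Ptr \<Lambda>0 fst)"
    unfolding induced_def by (simp add: prob_space.distr_pair_fst[OF prob_space_Qtr])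
  also have "\<dots> = (\<integral>\<omega>. G (fst \<omega>) \<partial>Ptr)"
    unfolding induced_def by (rule integral_distr) measurable
  finally show ?thesis ..
qed

lemma integrable_Ptr_fst_iff:
  fixes G :: "real \<times> (real^'p) \<Rightarrow> real"
  assumes [measurable]: "G \<in> borel_measurable borel"
  shows "integrable Ptr (\<lambda>\<omega>. G (fst \<omega>)) \<longleftrightarrow> integrable \<Lambda>0 G"
proof -
  have "integrable \<Lambda>0 G \<longleftrightarrow> integrable (distr Ptr \<Lambda>0 fst) G"
    unfolding induced_def by (simp add: prob_space.distr_pair_fst[OF prob_space_Qtr])
  also have "\<dots> \<longleftrightarrow> integrable Ptr (\<lambda>\<omega>. G (fst \<omega>))"
    unfolding induced_def by (rule integrable_distr_eq) measurable
  finally show ?thesis ..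
qed

lemma integrable_simU: "integrable Ptr simU"
  using integrable_Ptr_fst_iff[of fst] integrable_fst[OF integrable_\<Lambda>0]
  unfolding simU_def[abs_def] by (simp add: borel_measurable_continuous_onI continuous_intros)

lemma integral_simU: "(\<integral>\<omega>. simU \<omega> \<partial>Ptr) = 0"
  using integral_Ptr_fst[of fst] integral_fst[OF integrable_\<Lambda>0] integral_\<Lambda>0
  unfolding simU_def[abs_def] by (simp add: borel_measurable_continuous_onI continuous_intros)

lemma integrable_f0X: "integrable Ptr (\<lambda>\<omega>. f0 (simX M0 \<omega>))"
proof (rule finite_measure.square_integrable_imp_integrable)
  show "finite_measure Ptr"
    using prob_space_Ptr by (simp add: prob_space_def)
  show "integrable Ptr (\<lambda>\<omega>. (f0 (simX M0 \<omega>))\<^sup>2)"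
    using f0X_square by (simp add: integrable_iff_bounded)
qed measurable

lemma sigma_finite_subalgebra_V: "sigma_finite_subalgebra Ptr (sigma_V Ptr)"
  unfolding sigma_V_def using prob_space_Ptr
  by (intro finite_measure.sigma_finite_subalgebra_vimage_algebra) (auto simp: prob_space_def)

lemma sigma_finite_subalgebra_XV: "sigma_finite_subalgebra Ptr (sigma_XV M0 Ptr)"
  unfolding sigma_XV_def using prob_space_Ptr
  by (intro finite_measure.sigma_finite_subalgebra_vimage_algebra) (auto simp: prob_space_def)

lemma sigma_finite_subalgebra_RX: "sigma_finite_subalgebra Ptr (sigma_RX M0 R Ptr)"
  unfolding sigma_RX_def using prob_space_Ptr
  by (intro finite_measure.sigma_finite_subalgebra_vimage_algebra) (auto simp: prob_space_def)

text \<open>\<open>gamma0V Ptr\<close> is \<open>\<sigma>(V)\<close>-measurable, hence constant on the fibres of \<open>V\<close>; its value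
  on the fibre \<open>V = v\<close> is read off at the sample \<open>((0, v), 0)\<close>.\<close>
definition gamma0 :: "real^'p \<Rightarrow> real" where
  "gamma0 v = gamma0V Ptr ((0, v), 0)"

lemma gamma0V_eq: "gamma0V Ptr = (\<lambda>\<omega>. gamma0 (simV \<omega>))"
proof
  fix \<omega> :: "('p, 'r) sample"
  show "gamma0V Ptr \<omega> = gamma0 (simV \<omega>)"
    unfolding gamma0_def
  proof (rule measurable_vimage_algebra_fibre_eq[where S = "space Ptr" and \<phi> = simV and N = borel])
    show "gamma0V Ptr \<in> borel_measurable (vimage_algebra (space Ptr) simV borel)"
      unfolding gamma0V_def sigma_V_def[symmetric] by (rule borel_measurable_cond_exp)
  qed (auto simp: space_Ptr simV_def)
qed

lemma borel_measurable_gamma0 [measurable]: "gamma0 \<in> borel_measurable borel"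
proof -
  have "gamma0V Ptr \<in> borel_measurable borel"
    unfolding gamma0V_def using borel_measurable_cond_exp2 measurable_cong_sets[OF sets_Ptr refl]
    by blast
  moreover have "(\<lambda>v::real^'p. (((0::real), v), (0::real^'r))) \<in> measurable borel borel"
    by (intro borel_measurable_continuous_onI continuous_intros)
  ultimately show ?thesis
    unfolding gamma0_def[abs_def] by measurable
qed

lemma integrable_gamma0V: "integrable Ptr (\<lambda>\<omega>. gamma0 (simV \<omega>))"
  using sigma_finite_subalgebra.real_cond_exp_int(1)[OF sigma_finite_subalgebra_V integrable_simU]
  by (simp add: gamma0V_def[symmetric] gamma0V_eq)

lemma integral_gamma0V: "(\<integral>\<omega>. gamma0 (simV \<omega>) \<partial>Ptr) = 0"
  using sigma_finite_subalgebra.real_cond_exp_int(2)[OF sigma_finite_subalgebra_V integrable_simU]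
  by (simp add: gamma0V_def[symmetric] gamma0V_eq integral_simU)

lemma integral_indicator_snd_fst_minus_gamma0:
  assumes [measurable]: "B \<in> sets borel"
  shows "(\<integral>w. indicator B (snd w) * (fst w - gamma0 (snd w)) \<partial>\<Lambda>0) = 0"
proof -
  have "simV -` B \<in> sets Ptr"
    using measurable_sets[OF borel_measurable_simV assms] by (simp add: sets_Ptr)
  then have integrable_ind: "integrable Ptr (\<lambda>\<omega>. indicator B (simV \<omega>) * F \<omega>)" if "integrable Ptr F" for F :: "('p, 'r) sample \<Rightarrow> real"
    using integrable_mult_indicator[of "simV -` B" Ptr F] that by (simp add: indicator_vimage)
  have "simV -` B \<inter> space Ptr \<in> sets (sigma_V Ptr)"
    unfolding sigma_V_def by (rule in_vimage_algebra) fact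
  from sigma_finite_subalgebra.real_cond_exp_intA[OF sigma_finite_subalgebra_V integrable_simU this]
  have "(\<integral>\<omega>. indicator B (simV \<omega>) * simU \<omega> \<partial>Ptr) = (\<integral>\<omega>. indicator B (simV \<omega>) * gamma0 (simV \<omega>) \<partial>Ptr)"
    by (simp add: set_lebesgue_integral_def gamma0V_def[symmetric] gamma0V_eq space_Ptr indicator_vimage)
  moreover have "(\<integral>\<omega>. indicator B (simV \<omega>) * (simU \<omega> - gamma0 (simV \<omega>)) \<partial>Ptr)
      = (\<integral>\<omega>. indicator B (simV \<omega>) * simU \<omega> \<partial>Ptr) - (\<integral>\<omega>. indicator B (simV \<omega>) * gamma0 (simV \<omega>) \<partial>Ptr)"
    unfolding right_diff_distrib
    by (intro Bochner_Integration.integral_diff integrable_ind integrable_simU integrable_gamma0V)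
  moreover have "(\<integral>\<omega>. indicator B (simV \<omega>) * (simU \<omega> - gamma0 (simV \<omega>)) \<partial>Ptr)
      = (\<integral>w. indicator B (snd w) * (fst w - gamma0 (snd w)) \<partial>\<Lambda>0)"
    unfolding simU_def simV_def
    by (rule integral_Ptr_fst) measurable
  ultimately show ?thesis by simp
qed

lemma integral_indicator_sigma_XV_U_minus_gamma0:
  assumes "A \<in> sets (sigma_XV M0 Ptr)"
  shows "(\<integral>\<omega>. indicator A \<omega> * (simU \<omega> - gamma0 (simV \<omega>)) \<partial>Ptr) = 0"
proof -
  from assms obtain D where D: "D \<in> sets borel" and A: "A = (\<lambda>\<omega>. (simX M0 \<omega>, simV \<omega>)) -` D \<inter> space Ptr"
    unfolding sigma_XV_def using sets_vimage_algebra2[of "\<lambda>\<omega>. (simX M0 \<omega>, simV \<omega>)" "space Ptr" borel]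
    by auto
  \<comment> \<open>\<open>\<sigma>(X, V) \<subseteq> \<sigma>(V, Z)\<close>, and \<open>Z\<close> is independent of \<open>(U, V)\<close>.\<close>
  define D' where "D' = (\<lambda>w. (M0 *v snd w + fst w, fst w)) -` D"
  have "continuous_on UNIV (\<lambda>w :: (real^'p) \<times> (real^'r). M0 *v snd w)"
    by (rule continuous_on_compose2[OF matrix_vector_mult_linear_continuous_on
          continuous_on_snd[OF continuous_on_id]]) auto
  then have "(\<lambda>w. (M0 *v snd w + fst w, fst w)) \<in> borel_measurable (borel :: ((real^'p) \<times> (real^'r)) measure)"
    by (intro borel_measurable_continuous_onI continuous_intros)
  from measurable_sets[OF this D] have "D' \<in> sets (borel \<Otimes>\<^sub>M Qtr)"
    unfolding D'_def sets_borel_pair_Qtr by simp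
  have "integrable Ptr (\<lambda>\<omega>. simU \<omega> - gamma0 (simV \<omega>))"
    by (intro Bochner_Integration.integrable_diff integrable_simU integrable_gamma0V)
  then have integrable_U_minus_gamma0: "integrable \<Lambda>0 (\<lambda>w. fst w - gamma0 (snd w))"
    by (subst integrable_Ptr_fst_iff[symmetric]) (simp_all add: simU_def simV_def)
  have measurable_snd: "snd \<in> borel_measurable \<Lambda>0"
    by measurable
  have indicator_A: "indicator A \<omega> = (indicator D' (simV \<omega>, simZ \<omega>) :: real)" for \<omega>
    unfolding A D'_def by (simp add: space_Ptr simX_def indicator_def)
  have "(\<integral>\<omega>. indicator A \<omega> * (simU \<omega> - gamma0 (simV \<omega>)) \<partial>Ptr)
      = integral\<^sup>L (\<Lambda>0 \<Otimes>\<^sub>M Qtr) (\<lambda>(w, z). indicator D' (snd w, z) * (fst w - gamma0 (snd w)))"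
    unfolding indicator_A by (simp add: induced_def simU_def simV_def simZ_def split_beta')
  also have "\<dots> = 0"
    by (rule pair_prob_space.integral_indicator_vimage_pair_eq_0[OF pair_prob_space
          integrable_U_minus_gamma0 measurable_snd integral_indicator_snd_fst_minus_gamma0
          \<open>D' \<in> sets (borel \<Otimes>\<^sub>M Qtr)\<close>])
  finally show ?thesis .
qed

lemma cond_exp_Y_XV:
  "AE \<omega> in Ptr. real_cond_exp Ptr (sigma_XV M0 Ptr) (simY f0 M0) \<omega> = f0 (simX M0 \<omega>) + gamma0 (simV \<omega>)"
proof (rule sigma_finite_subalgebra.real_cond_exp_charact[OF sigma_finite_subalgebra_XV])
  show "integrable Ptr (simY f0 M0)"
    unfolding simY_def[abs_def] by (intro Bochner_Integration.integrable_add integrable_f0X integrable_simU)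
  show integrable_rhs: "integrable Ptr (\<lambda>\<omega>. f0 (simX M0 \<omega>) + gamma0 (simV \<omega>))"
    by (intro Bochner_Integration.integrable_add integrable_f0X integrable_gamma0V)
  have "(\<lambda>(x, v). f0 x + gamma0 v) \<in> borel_measurable (borel :: ((real^'p) \<times> (real^'p)) measure)"
    by measurable
  from measurable_comp_vimage_algebra[OF _ this, of "\<lambda>\<omega>. (simX M0 \<omega>, simV \<omega>)" "space Ptr"]
  show "(\<lambda>\<omega>. f0 (simX M0 \<omega>) + gamma0 (simV \<omega>)) \<in> borel_measurable (sigma_XV M0 Ptr)"
    unfolding sigma_XV_def by simp
  fix A assume A: "A \<in> sets (sigma_XV M0 Ptr)"
  then have "A \<in> sets Ptr"
    using sigma_finite_subalgebra_XV by (auto simp: sigma_finite_subalgebra_def subalgebra_def)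
  then have integrable_indicator: "integrable Ptr (\<lambda>\<omega>. indicator A \<omega> * F \<omega>)"
    if "integrable Ptr F" for F :: "('p, 'r) sample \<Rightarrow> real"
    using integrable_mult_indicator[OF _ that] by simp
  have "(\<integral>\<omega>\<in>A. simY f0 M0 \<omega> \<partial>Ptr) = (\<integral>\<omega>. indicator A \<omega> * (f0 (simX M0 \<omega>) + gamma0 (simV \<omega>))
      + indicator A \<omega> * (simU \<omega> - gamma0 (simV \<omega>)) \<partial>Ptr)"
    unfolding set_lebesgue_integral_def simY_def by (simp add: algebra_simps)
  also have "\<dots> = (\<integral>\<omega>\<in>A. f0 (simX M0 \<omega>) + gamma0 (simV \<omega>) \<partial>Ptr)"
    unfolding set_lebesgue_integral_def
    by (simp add: Bochner_Integration.integral_add integrable_indicator integrable_rhs integrable_simU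
        integrable_gamma0V integral_indicator_sigma_XV_U_minus_gamma0[OF A])
  finally show "(\<integral>\<omega>\<in>A. simY f0 M0 \<omega> \<partial>Ptr) = (\<integral>\<omega>\<in>A. f0 (simX M0 \<omega>) + gamma0 (simV \<omega>) \<partial>Ptr)" .
qed

lemma AE_cond_exp_Y_eq_iff:
  "(AE \<omega> in Ptr. real_cond_exp Ptr (sigma_XV M0 Ptr) (simY f0 M0) \<omega> = f (simX M0 \<omega>) + \<gamma> (simV \<omega>))
    \<longleftrightarrow> (AE \<omega> in Ptr. f0 (simX M0 \<omega>) - f (simX M0 \<omega>) + (gamma0 (simV \<omega>) - \<gamma> (simV \<omega>)) = 0)"
  by (rule eventually_subst) (use cond_exp_Y_XV in \<open>eventually_elim, auto\<close>)

lemma RX_funcset: "(\<lambda>\<omega>. RT M0 R (simX M0 \<omega>)) \<in> space Ptr \<rightarrow> space (RT_space M0)"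
proof -
  have "(\<lambda>\<omega>. RT M0 R (simX M0 \<omega>)) \<in> measurable Ptr (RT_space M0)"
    by measurable
  then show ?thesis
    by (rule measurable_space[THEN funcsetI])
qed

lemma cond_exp_RX_factor: "\<exists>\<delta>. \<forall>\<omega>. real_cond_exp Ptr (sigma_RX M0 R Ptr) F \<omega> = \<delta> (RT M0 R (simX M0 \<omega>))"
proof -
  have "real_cond_exp Ptr (sigma_RX M0 R Ptr) F
      \<in> borel_measurable (vimage_algebra (space Ptr) (\<lambda>\<omega>. RT M0 R (simX M0 \<omega>)) (RT_space M0))"
    unfolding sigma_RX_def[symmetric] by (rule borel_measurable_cond_exp)
  from measurable_vimage_algebra_factor[OF this RX_funcset] show ?thesis
    by (simp add: space_Ptr)
qed

lemma AE_eq_comp_RX_imp_measurable_version: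
  fixes \<delta> :: "(nat \<Rightarrow> real) \<Rightarrow> real"
  assumes [measurable]: "h \<in> borel_measurable borel"
    and "AE \<omega> in Ptr. h (simX M0 \<omega>) = \<delta> (RT M0 R (simX M0 \<omega>))"
  shows "\<exists>K \<in> borel_measurable (sigma_RX M0 R Ptr). AE \<omega> in Ptr. h (simX M0 \<omega>) = K \<omega>"
proof -
  have "RT M0 R (R_mult M0 R (RT M0 R x)) = RT M0 R x" for x
    by (rule RT_R_mult[OF ker_onb]) (simp add: RT_def)
  with assms(2) have "AE \<omega> in Ptr. h (simX M0 \<omega>) = (\<lambda>x. \<delta> (RT M0 R x)) (R_mult M0 R (RT M0 R (simX M0 \<omega>)))"
    by simp
  moreover have "finite_measure Ptr"
    using prob_space_Ptr by (simp add: prob_space_def)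
  moreover have "continuous_on UNIV (\<lambda>\<omega>. R_mult M0 R (RT M0 R (simX M0 \<omega>)))"
    using continuous_on_compose2[OF continuous_on_R_mult_RT continuous_on_simX] by simp
  moreover have "(\<lambda>\<omega>. h (simX M0 \<omega>)) \<in> borel_measurable borel"
    by measurable
  ultimately have "\<exists>\<delta>'\<in>borel_measurable borel. AE \<omega> in Ptr. h (simX M0 \<omega>) = \<delta>' (R_mult M0 R (RT M0 R (simX M0 \<omega>)))"
    by (intro AE_eq_comp_borel_factor[OF sets_Ptr, where \<delta> = "\<lambda>x. \<delta> (RT M0 R x)"])
  then obtain \<delta>' where [measurable]: "\<delta>' \<in> borel_measurable borel"
    and h_eq: "AE \<omega> in Ptr. h (simX M0 \<omega>) = \<delta>' (R_mult M0 R (RT M0 R (simX M0 \<omega>)))"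
    by blast
  define K where "K \<omega> = \<delta>' (R_mult M0 R (RT M0 R (simX M0 \<omega>)))" for \<omega>
  have "K \<in> borel_measurable (sigma_RX M0 R Ptr)"
    unfolding sigma_RX_def K_def
    by (rule measurable_comp_vimage_algebra[OF RX_funcset, where g = "\<lambda>y. \<delta>' (R_mult M0 R y)"]) measurable
  with h_eq show ?thesis
    unfolding K_def[symmetric] by blast
qed

lemma AE_eq_cond_exp_RX_iff:
  assumes "h \<in> borel_measurable borel" and "integrable Ptr (\<lambda>\<omega>. h (simX M0 \<omega>))"
  shows "(AE \<omega> in Ptr. h (simX M0 \<omega>) = real_cond_exp Ptr (sigma_RX M0 R Ptr) (\<lambda>\<omega>. h (simX M0 \<omega>)) \<omega>)
    \<longleftrightarrow> (\<exists>\<delta>. AE \<omega> in Ptr. h (simX M0 \<omega>) = \<delta> (RT M0 R (simX M0 \<omega>)))"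
proof
  assume h_eq: "AE \<omega> in Ptr. h (simX M0 \<omega>) = real_cond_exp Ptr (sigma_RX M0 R Ptr) (\<lambda>\<omega>. h (simX M0 \<omega>)) \<omega>"
  obtain \<delta> where "\<forall>\<omega>. real_cond_exp Ptr (sigma_RX M0 R Ptr) (\<lambda>\<omega>. h (simX M0 \<omega>)) \<omega> = \<delta> (RT M0 R (simX M0 \<omega>))"
    using cond_exp_RX_factor by blast
  with h_eq have "AE \<omega> in Ptr. h (simX M0 \<omega>) = \<delta> (RT M0 R (simX M0 \<omega>))"
    by simp
  then show "\<exists>\<delta>. AE \<omega> in Ptr. h (simX M0 \<omega>) = \<delta> (RT M0 R (simX M0 \<omega>))"
    by blast
next
  assume "\<exists>\<delta>. AE \<omega> in Ptr. h (simX M0 \<omega>) = \<delta> (RT M0 R (simX M0 \<omega>))"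
  then obtain \<delta> where "AE \<omega> in Ptr. h (simX M0 \<omega>) = \<delta> (RT M0 R (simX M0 \<omega>))" ..
  from AE_eq_comp_RX_imp_measurable_version[OF assms(1) this]
  obtain K where K: "K \<in> borel_measurable (sigma_RX M0 R Ptr)" and h_eq: "AE \<omega> in Ptr. h (simX M0 \<omega>) = K \<omega>"
    by blast
  from sigma_finite_subalgebra.real_cond_exp_AE_F_meas[OF sigma_finite_subalgebra_RX assms(2) K h_eq]
  show "AE \<omega> in Ptr. h (simX M0 \<omega>) = real_cond_exp Ptr (sigma_RX M0 R Ptr) (\<lambda>\<omega>. h (simX M0 \<omega>)) \<omega>"
    by eventually_elim simp
qed

text \<open>For \<open>q = p\<close> the paper takes \<open>R = 0\<close>, so a function of \<open>R\<^sup>T X\<close> is a constant.\<close>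
definition determined_by_RX :: "(real^'p \<Rightarrow> real) \<Rightarrow> bool" where
  "determined_by_RX h \<longleftrightarrow>
    (if rank M0 < CARD('p) then \<exists>\<delta>. AE \<omega> in Ptr. h (simX M0 \<omega>) = \<delta> (RT M0 R (simX M0 \<omega>))
     else \<exists>c. AE \<omega> in Ptr. h (simX M0 \<omega>) = c)"

lemma determined_by_RX_iff_cond_exp:
  assumes "h \<in> borel_measurable borel" and integrable_hX: "integrable Ptr (\<lambda>\<omega>. h (simX M0 \<omega>))"
  shows "determined_by_RX h \<longleftrightarrow>
    (if rank M0 < CARD('p)
     then AE \<omega> in Ptr. h (simX M0 \<omega>) = real_cond_exp Ptr (sigma_RX M0 R Ptr) (\<lambda>\<omega>. h (simX M0 \<omega>)) \<omega>
     else AE \<omega> in Ptr. h (simX M0 \<omega>) = (\<integral>\<omega>. h (simX M0 \<omega>) \<partial>Ptr))"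
  using AE_eq_cond_exp_RX_iff[OF assms] prob_space.AE_eq_expectation_iff[OF prob_space_Ptr integrable_hX]
  unfolding determined_by_RX_def by simp

lemma determined_by_RX_arctan: "determined_by_RX (\<lambda>x. arctan (h x)) \<longleftrightarrow> determined_by_RX h"
proof (cases "rank M0 < CARD('p)")
  case True
  then show ?thesis
    unfolding determined_by_RX_def
    using AE_eq_comp_arctan_iff[where M = Ptr and \<phi> = "\<lambda>\<omega>. RT M0 R (simX M0 \<omega>)"] by simp
next
  case False
  have const_iff: "(\<exists>c. AE \<omega> in Ptr. Y \<omega> = c) \<longleftrightarrow> (\<exists>\<delta>. AE \<omega> in Ptr. Y \<omega> = \<delta> ())" for Y :: "_ \<Rightarrow> real"
  proof
    assume "\<exists>c. AE \<omega> in Ptr. Y \<omega> = c"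
    then obtain c where "AE \<omega> in Ptr. Y \<omega> = c" ..
    then show "\<exists>\<delta>. AE \<omega> in Ptr. Y \<omega> = \<delta> ()"
      by (intro exI[where x = "\<lambda>_. c"])
  next
    assume "\<exists>\<delta>. AE \<omega> in Ptr. Y \<omega> = \<delta> ()"
    then obtain \<delta> where "AE \<omega> in Ptr. Y \<omega> = \<delta> ()" ..
    then show "\<exists>c. AE \<omega> in Ptr. Y \<omega> = c" ..
  qed
  show ?thesis
    unfolding determined_by_RX_def const_iff
    using False AE_eq_comp_arctan_iff[where M = Ptr and \<phi> = "\<lambda>_. ()"] by simp
qed

context
  fixes f \<gamma> :: "real^'p \<Rightarrow> real"
  assumes borel_measurable_f [measurable]: "f \<in> borel_measurable borel"
    and borel_measurable_\<gamma> [measurable]: "\<gamma> \<in> borel_measurable borel"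
    and integrable_\<gamma>V: "integrable Ptr (\<lambda>\<omega>. \<gamma> (simV \<omega>))"
    and f_\<gamma>_eq: "AE \<omega> in Ptr. f0 (simX M0 \<omega>) - f (simX M0 \<omega>) + (gamma0 (simV \<omega>) - \<gamma> (simV \<omega>)) = 0"
begin

lemma AE_\<gamma>V_eq: "AE \<omega> in Ptr. \<gamma> (simV \<omega>) = gamma0 (simV \<omega>) + (f0 (simX M0 \<omega>) - f (simX M0 \<omega>))"
  using f_\<gamma>_eq by eventually_elim simp

lemma integrable_f0X_minus_fX: "integrable Ptr (\<lambda>\<omega>. f0 (simX M0 \<omega>) - f (simX M0 \<omega>))"
proof -
  have ae: "AE \<omega> in Ptr. \<gamma> (simV \<omega>) - gamma0 (simV \<omega>) = f0 (simX M0 \<omega>) - f (simX M0 \<omega>)"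
    using AE_\<gamma>V_eq by eventually_elim simp
  have "integrable Ptr (\<lambda>\<omega>. \<gamma> (simV \<omega>) - gamma0 (simV \<omega>))
      \<longleftrightarrow> integrable Ptr (\<lambda>\<omega>. f0 (simX M0 \<omega>) - f (simX M0 \<omega>))"
    by (rule integrable_cong_AE[OF _ _ ae]; measurable)
  then show ?thesis
    using Bochner_Integration.integrable_diff[OF integrable_\<gamma>V integrable_gamma0V] by simp
qed

lemma AE_fstar_eq_cond_exp_iff:
  assumes "rank M0 < CARD('p)"
  shows "(AE \<omega> in Ptr. fstarX f0 M0 R Ptr \<omega>
      = f (simX M0 \<omega>) + real_cond_exp Ptr (sigma_RX M0 R Ptr) (\<lambda>\<omega>'. \<gamma> (simV \<omega>')) \<omega>)
    \<longleftrightarrow> (AE \<omega> in Ptr. f0 (simX M0 \<omega>) - f (simX M0 \<omega>)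
      = real_cond_exp Ptr (sigma_RX M0 R Ptr) (\<lambda>\<omega>. f0 (simX M0 \<omega>) - f (simX M0 \<omega>)) \<omega>)"
proof (rule eventually_subst)
  let ?CE = "real_cond_exp Ptr (sigma_RX M0 R Ptr)"
  have "AE \<omega> in Ptr. ?CE (\<lambda>\<omega>. \<gamma> (simV \<omega>)) \<omega>
      = ?CE (\<lambda>\<omega>. gamma0 (simV \<omega>) + (f0 (simX M0 \<omega>) - f (simX M0 \<omega>))) \<omega>"
    by (rule sigma_finite_subalgebra.real_cond_exp_cong[OF sigma_finite_subalgebra_RX AE_\<gamma>V_eq];
        measurable)
  moreover have "AE \<omega> in Ptr. ?CE (\<lambda>\<omega>. gamma0 (simV \<omega>) + (f0 (simX M0 \<omega>) - f (simX M0 \<omega>))) \<omega>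
      = ?CE (\<lambda>\<omega>. gamma0 (simV \<omega>)) \<omega> + ?CE (\<lambda>\<omega>. f0 (simX M0 \<omega>) - f (simX M0 \<omega>)) \<omega>"
    by (rule sigma_finite_subalgebra.real_cond_exp_add[OF sigma_finite_subalgebra_RX
          integrable_gamma0V integrable_f0X_minus_fX])
  ultimately show "AE \<omega> in Ptr. (fstarX f0 M0 R Ptr \<omega> = f (simX M0 \<omega>) + ?CE (\<lambda>\<omega>'. \<gamma> (simV \<omega>')) \<omega>)
      = (f0 (simX M0 \<omega>) - f (simX M0 \<omega>) = ?CE (\<lambda>\<omega>. f0 (simX M0 \<omega>) - f (simX M0 \<omega>)) \<omega>)"
    by eventually_elim (auto simp: fstarX_def gamma0V_eq assms)
qed

lemma AE_fstar_eq_integral_iff: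
  assumes "\<not> rank M0 < CARD('p)"
  shows "(AE \<omega> in Ptr. fstarX f0 M0 R Ptr \<omega> = f (simX M0 \<omega>) + (\<integral>\<omega>'. \<gamma> (simV \<omega>') \<partial>Ptr))
    \<longleftrightarrow> (AE \<omega> in Ptr. f0 (simX M0 \<omega>) - f (simX M0 \<omega>)
      = (\<integral>\<omega>. f0 (simX M0 \<omega>) - f (simX M0 \<omega>) \<partial>Ptr))"
proof -
  have "(\<integral>\<omega>. \<gamma> (simV \<omega>) \<partial>Ptr) = (\<integral>\<omega>. gamma0 (simV \<omega>) + (f0 (simX M0 \<omega>) - f (simX M0 \<omega>)) \<partial>Ptr)"
    by (rule integral_cong_AE[OF _ _ AE_\<gamma>V_eq]; measurable)
  also have "\<dots> = (\<integral>\<omega>. f0 (simX M0 \<omega>) - f (simX M0 \<omega>) \<partial>Ptr)"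
    by (simp add: Bochner_Integration.integral_add[OF integrable_gamma0V integrable_f0X_minus_fX]
        integral_gamma0V)
  finally show ?thesis
    by (auto simp: fstarX_def assms algebra_simps)
qed

lemma BCF_conclusion_iff_determined_by_RX:
  "(if rank M0 < CARD('p) then
      (AE \<omega> in Ptr. fstarX f0 M0 R Ptr \<omega>
        = f (simX M0 \<omega>) + real_cond_exp Ptr (sigma_RX M0 R Ptr) (\<lambda>\<omega>'. \<gamma> (simV \<omega>')) \<omega>)
    else
      (AE \<omega> in Ptr. fstarX f0 M0 R Ptr \<omega> = f (simX M0 \<omega>) + (\<integral>\<omega>'. \<gamma> (simV \<omega>') \<partial>Ptr)))
    \<longleftrightarrow> determined_by_RX (\<lambda>x. f0 x - f x)"
  using determined_by_RX_iff_cond_exp[of "\<lambda>x. f0 x - f x"] integrable_f0X_minus_fX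
    AE_fstar_eq_cond_exp_iff AE_fstar_eq_integral_iff
  by simp

end

lemma BCF_identifiable_imp_determined_by_RX:
  assumes identifiable: "BCF_identifiable f0 M0 R Ptr"
  shows "\<forall>h \<in> borel_measurable borel. \<forall>g \<in> borel_measurable borel.
    (AE \<omega> in Ptr. h (simX M0 \<omega>) + g (simV \<omega>) = 0) \<longrightarrow> determined_by_RX h"
proof (intro ballI impI)
  fix h g :: "real^'p \<Rightarrow> real"
  assume [measurable]: "h \<in> borel_measurable borel" "g \<in> borel_measurable borel"
    and h_g: "AE \<omega> in Ptr. h (simX M0 \<omega>) + g (simV \<omega>) = 0"
  \<comment> \<open>\<open>arctan\<close> makes the candidate control function bounded, hence integrable.\<close>
  define f where "f x = f0 x - arctan (h x)" for x
  define \<gamma> where "\<gamma> v = gamma0 v + arctan (- g v)" for v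
  have f_borel [measurable]: "f \<in> borel_measurable borel"
    unfolding f_def[abs_def] by measurable
  have \<gamma>_borel [measurable]: "\<gamma> \<in> borel_measurable borel"
    unfolding \<gamma>_def[abs_def] by measurable
  have "norm (arctan y) \<le> pi / 2" for y
    using arctan_lbound[of y] arctan_ubound[of y] by simp
  with prob_space_Ptr have "integrable Ptr (\<lambda>\<omega>. arctan (- g (simV \<omega>)))"
    by (intro finite_measure.integrable_const_bound[where B = "pi / 2"] AE_I2)
      (auto simp: prob_space_def)
  then have integrable_\<gamma>V: "integrable Ptr (\<lambda>\<omega>. \<gamma> (simV \<omega>))"
    unfolding \<gamma>_def using integrable_gamma0V by (rule Bochner_Integration.integrable_add[rotated])
  have f_\<gamma>_eq: "AE \<omega> in Ptr. f0 (simX M0 \<omega>) - f (simX M0 \<omega>) + (gamma0 (simV \<omega>) - \<gamma> (simV \<omega>)) = 0"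
    using h_g by eventually_elim (simp add: f_def \<gamma>_def eq_neg_iff_add_eq_0[symmetric])
  have "determined_by_RX (\<lambda>x. f0 x - f x)"
    using identifiable[unfolded BCF_identifiable_def AE_cond_exp_Y_eq_iff, rule_format,
        OF f_borel \<gamma>_borel integrable_\<gamma>V f_\<gamma>_eq]
    by (simp add: BCF_conclusion_iff_determined_by_RX[OF f_borel \<gamma>_borel integrable_\<gamma>V f_\<gamma>_eq])
  then show "determined_by_RX h"
    by (simp add: f_def determined_by_RX_arctan)
qed

lemma determined_by_RX_imp_BCF_identifiable:
  assumes determined: "\<forall>h \<in> borel_measurable borel. \<forall>g \<in> borel_measurable borel.
    (AE \<omega> in Ptr. h (simX M0 \<omega>) + g (simV \<omega>) = 0) \<longrightarrow> determined_by_RX h"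
  shows "BCF_identifiable f0 M0 R Ptr"
  unfolding BCF_identifiable_def AE_cond_exp_Y_eq_iff
proof (intro ballI impI)
  fix f \<gamma> :: "real^'p \<Rightarrow> real"
  assume f_borel [measurable]: "f \<in> borel_measurable borel"
    and \<gamma>_borel [measurable]: "\<gamma> \<in> borel_measurable borel"
    and integrable_\<gamma>V: "integrable Ptr (\<lambda>\<omega>. \<gamma> (simV \<omega>))"
    and f_\<gamma>_eq: "AE \<omega> in Ptr. f0 (simX M0 \<omega>) - f (simX M0 \<omega>) + (gamma0 (simV \<omega>) - \<gamma> (simV \<omega>)) = 0"
  have "determined_by_RX (\<lambda>x. f0 x - f x)"
    using determined[rule_format, of "\<lambda>x. f0 x - f x" "\<lambda>v. gamma0 v - \<gamma> v"] f_\<gamma>_eq by simp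
  then show "if rank M0 < CARD('p)
    then AE \<omega> in Ptr. fstarX f0 M0 R Ptr \<omega>
      = f (simX M0 \<omega>) + real_cond_exp Ptr (sigma_RX M0 R Ptr) (\<lambda>\<omega>'. \<gamma> (simV \<omega>')) \<omega>
    else AE \<omega> in Ptr. fstarX f0 M0 R Ptr \<omega> = f (simX M0 \<omega>) + (\<integral>\<omega>'. \<gamma> (simV \<omega>') \<partial>Ptr)"
    using BCF_conclusion_iff_determined_by_RX[OF f_borel \<gamma>_borel integrable_\<gamma>V f_\<gamma>_eq] by simp
qed

end

theorem proposition2:
  fixes f0 :: "real^'p \<Rightarrow> real"
    and M0 :: "real^'r^'p"
    and \<Lambda>0 :: "(real \<times> (real^'p)) measure"
    and Q0 :: "(real^'r) measure set"
    and Qtr :: "(real^'r) measure"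
    and R :: "nat \<Rightarrow> real^'p"
  assumes simdg: "SIMDG f0 M0 \<Lambda>0 Q0"
    and sup_fin: "sup_second_moment_finite f0 M0 \<Lambda>0 Q0"
    and Qtr_in: "Qtr \<in> Q0"
    and Qtr_tr: "training_distribution Qtr"
    and R_onb: "ker_onb M0 R"
  shows "BCF_identifiable f0 M0 R (induced \<Lambda>0 Qtr) \<longleftrightarrow>
    (\<forall>h \<in> borel_measurable (borel :: (real^'p) measure).
     \<forall>g \<in> borel_measurable (borel :: (real^'p) measure).
       (AE \<omega> in induced \<Lambda>0 Qtr. h (simX M0 \<omega>) + g (simV \<omega>) = 0) \<longrightarrow>
       (if rank M0 < CARD('p) then
          (\<exists>\<delta> :: (nat \<Rightarrow> real) \<Rightarrow> real. AE \<omega> in induced \<Lambda>0 Qtr. h (simX M0 \<omega>) = \<delta> (RT M0 R (simX M0 \<omega>)))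
        else
          (\<exists>c :: real. AE \<omega> in induced \<Lambda>0 Qtr. h (simX M0 \<omega>) = c)))"
proof -
  interpret simdg_training f0 M0 \<Lambda>0 Qtr R
  proof (rule simdg_training.intro)
    show "(\<integral>\<^sup>+ \<omega>. ennreal ((f0 (simX M0 \<omega>))\<^sup>2) \<partial>induced \<Lambda>0 Qtr) < \<infinity>"
      using SUP_upper[OF Qtr_in, of "\<lambda>Q. \<integral>\<^sup>+ \<omega>. ennreal ((f0 (simX M0 \<omega>))\<^sup>2) \<partial>induced \<Lambda>0 Q"] sup_fin
      unfolding sup_second_moment_finite_def by (rule le_less_trans)
  qed (use simdg Qtr_in R_onb in \<open>simp_all add: SIMDG_def\<close>)
  show ?thesis
    using BCF_identifiable_imp_determined_by_RX determined_by_RX_imp_BCF_identifiable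
    unfolding determined_by_RX_def by (intro iffI)
qed

end
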